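(* For every $n\ge 1$, $c_{n+1}\le (1-2^{-n})c_n+2^{-n}$.
   Context: For $n\ge1$, $c_n$ denotes the probability that $G\sim G(n,1/2)$ is not even-degenerate. A graph on $n$ vertices is even-degenerate if there is an ordering $v_1,\dots,v_n$ of its vertices such that for each $1\le i\le n-2$, $v_i$ has an even number of neighbours in $\{v_{i+1},\dots,v_n\}$. *)

theory Defs
  imports Main "HOL-Probability.Probability"
begin

definition all_edges :: "nat \<Rightarrow> nat set set" where
  "all_edges n = {e. \<exists>x y. x < n \<and> y < n \<and> x \<noteq> y \<and> e = {x, y}}"

text \<open>Even-degenerate: there is an ordering v_1..v_n of the vertices (a list vs,
  0-indexed) such that for each 1 \<le> i \<le> n-2 (i.e. 0-indexed i with i+2<n),
  v_i has an even number of neighbours among the later vertices.\<close>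

definition even_degenerate :: "nat \<Rightarrow> nat set set \<Rightarrow> bool" where
  "even_degenerate n E \<longleftrightarrow>
     (\<exists>vs. distinct vs \<and> set vs = {0..<n} \<and>
        (\<forall>i. i + 2 < n \<longrightarrow>
           even (card {j. i < j \<and> j < n \<and> {vs ! i, vs ! j} \<in> E})))"

definition Gnp_half :: "nat \<Rightarrow> nat set set pmf" where
  "Gnp_half n = pmf_of_set (Pow (all_edges n))"

definition c :: "nat \<Rightarrow> real" where
  "c n = measure_pmf.prob (Gnp_half n) {E. \<not> even_degenerate n E}"

end

theory Submission
  imports Defs
begin

text \<open>Given an even-degenerate graph \<open>H\<close> on \<open>n\<close> vertices and a position \<open>k < n\<close>, insert a
  new vertex \<open>k\<close> (moving the old vertices \<open>w \<ge> k\<close> up by one), join it to every earlier vertex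
  of even degree in \<open>H\<close> and to a set \<open>S\<close> of later vertices chosen so that the degree of \<open>k\<close>
  is even, and put \<open>k\<close> first in the ordering: the result is even-degenerate. For each \<open>k\<close>
  there are \<open>2 ^ (n - k - 1)\<close> admissible \<open>S\<close>, hence \<open>2 ^ n - 1\<close> extensions of \<open>H\<close>, and all
  extensions of all \<open>H\<close> are distinct: in the extension every vertex below \<open>k\<close> has odd degree,
  so \<open>k\<close> is the least vertex of even degree. Thus the number of even-degenerate graphs grows
  at least by the factor \<open>2 ^ n - 1\<close>, while the number of all graphs grows by \<open>2 ^ n\<close>.\<close>

lemma card_subsets_of_parity:
  assumes "finite A" "A \<noteq> {}"
  shows "card {S. S \<subseteq> A \<and> even (p + card S)} = 2 ^ (card A - 1)"
proof -
  let ?even = "{S. S \<subseteq> A \<and> even (card S)}" and ?odd = "{S. S \<subseteq> A \<and> odd (card S)}"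
  have "card ?even = card ?odd"
    using card_subsupersets_even_odd[of A "{}"] assms by auto
  moreover have "card ?even + card ?odd = 2 ^ card A"
  proof -
    have "Pow A = ?even \<union> ?odd" by auto
    then have "card (Pow A) = card ?even + card ?odd"
      using assms(1) by (simp add: card_Un_disjoint disjoint_iff)
    then show ?thesis using card_Pow assms(1) by metis
  qed
  moreover have "2 ^ card A = 2 * (2::nat) ^ (card A - 1)"
    using assms by (simp add: card_gt_0_iff flip: power_Suc)
  ultimately show ?thesis
    by (cases "even p") auto
qed

lemma sum_pow2_reflected: "(\<Sum>k<n. (2::nat) ^ (n - Suc k)) = 2 ^ n - 1"
  unfolding mask_eq_sum_exp lessThan_def[symmetric] by (rule sum.nat_diff_reindex)

lemma set_drop_eq: "set (drop m xs) = (!) xs ` {m..<length xs}"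
proof (intro equalityI subsetI)
  fix x assume "x \<in> set (drop m xs)"
  then obtain j where "j < length xs - m" "x = xs ! (m + j)"
    by (auto simp: in_set_conv_nth)
  then show "x \<in> (!) xs ` {m..<length xs}" by force
next
  fix x assume "x \<in> (!) xs ` {m..<length xs}"
  then obtain j where "m \<le> j" "j < length xs" "x = xs ! j" by auto
  then show "x \<in> set (drop m xs)" by (auto simp: in_set_conv_nth intro!: exI[of _ "j - m"])
qed

lemma card_later_indices:
  assumes "distinct vs"
  shows "card {j. i < j \<and> j < length vs \<and> P (vs ! j)} = card {x \<in> set (drop (Suc i) vs). P x}"
proof -
  have "{x \<in> set (drop (Suc i) vs). P x} = (!) vs ` {j. i < j \<and> j < length vs \<and> P (vs ! j)}"
    unfolding set_drop_eq by auto
  moreover have "inj_on ((!) vs) {j. i < j \<and> j < length vs \<and> P (vs ! j)}"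
    using assms by (intro inj_on_nth) auto
  ultimately show ?thesis by (simp add: card_image)
qed

lemma in_all_edgesI: "x < n \<Longrightarrow> y < n \<Longrightarrow> x \<noteq> y \<Longrightarrow> {x, y} \<in> all_edges n"
  unfolding all_edges_def by blast

lemma all_edgesE:
  assumes "e \<in> all_edges n"
  obtains x y where "x < n" "y < n" "x \<noteq> y" "e = {x, y}"
  using assms unfolding all_edges_def by blast

lemma all_edges_Suc: "all_edges (Suc n) = all_edges n \<union> (\<lambda>x. {x, n}) ` {0..<n}"
proof (intro equalityI subsetI)
  fix e assume "e \<in> all_edges (Suc n)"
  then obtain x y where xy: "x < Suc n" "y < Suc n" "x \<noteq> y" "e = {x, y}"
    by (rule all_edgesE)
  consider "x < n" "y < n" | "x = n" "y < n" | "y = n" "x < n" using xy by linarith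
  then show "e \<in> all_edges n \<union> (\<lambda>x. {x, n}) ` {0..<n}"
  proof cases
    case 1
    then show ?thesis using xy in_all_edgesI by blast
  next
    case 2
    have "e = {y, n}" using xy(4) 2(1) by (metis insert_commute)
    then show ?thesis using 2(2) by (intro UnI2 rev_image_eqI[of y]) simp_all
  next
    case 3
    then show ?thesis using xy(4) by (intro UnI2 rev_image_eqI[of x]) simp_all
  qed
next
  fix e assume "e \<in> all_edges n \<union> (\<lambda>x. {x, n}) ` {0..<n}"
  then show "e \<in> all_edges (Suc n)"
    by (auto elim!: all_edgesE intro!: in_all_edgesI)
qed

lemma finite_all_edges: "finite (all_edges n)"
  by (rule finite_subset[of _ "Pow {0..<n}"]) (auto simp: all_edges_def)

lemma card_all_edges_Suc: "card (all_edges (Suc n)) = card (all_edges n) + n"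
proof -
  have "all_edges n \<inter> (\<lambda>x. {x, n}) ` {0..<n} = {}"
    unfolding all_edges_def by (auto simp: doubleton_eq_iff)
  moreover have "inj_on (\<lambda>x. {x, n}) {0..<n}"
    by (auto simp: inj_on_def doubleton_eq_iff)
  ultimately show ?thesis
    unfolding all_edges_Suc by (simp add: card_Un_disjoint finite_all_edges card_image)
qed

definition nbrs :: "nat set set \<Rightarrow> nat \<Rightarrow> nat set" where
  "nbrs E v = {x. {v, x} \<in> E}"

lemma in_all_edges_less:
  assumes "{v, x} \<in> all_edges n"
  shows "x < n"
proof -
  obtain a b where "a < n" "b < n" "{v, x} = {a, b}"
    using assms by (rule all_edgesE)
  moreover have "x \<in> {v, x}" by simp
  ultimately show ?thesis by (metis insert_iff singletonD)
qed

lemma nbrs_subset: "E \<subseteq> all_edges n \<Longrightarrow> nbrs E v \<subseteq> {0..<n}"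
  unfolding nbrs_def using in_all_edges_less by auto

lemma finite_nbrs: "E \<subseteq> all_edges n \<Longrightarrow> finite (nbrs E v)"
  by (rule finite_subset[OF nbrs_subset]) auto

lemma even_degenerate_iff_nbrs:
  "even_degenerate n E \<longleftrightarrow>
     (\<exists>vs. distinct vs \<and> set vs = {0..<n} \<and>
        (\<forall>i. i + 2 < n \<longrightarrow> even (card (nbrs E (vs ! i) \<inter> set (drop (Suc i) vs)))))"
proof -
  have later: "card {j. i < j \<and> j < n \<and> {vs ! i, vs ! j} \<in> E}
      = card (nbrs E (vs ! i) \<inter> set (drop (Suc i) vs))"
    if "distinct vs" "set vs = {0..<n}" for vs i
  proof -
    have "n = length vs" using distinct_card[OF that(1)] that(2) by simp
    then have "card {j. i < j \<and> j < n \<and> {vs ! i, vs ! j} \<in> E}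
        = card {x \<in> set (drop (Suc i) vs). {vs ! i, x} \<in> E}"
      using card_later_indices[OF that(1)] by simp
    also have "{x \<in> set (drop (Suc i) vs). {vs ! i, x} \<in> E} = nbrs E (vs ! i) \<inter> set (drop (Suc i) vs)"
      by (auto simp: nbrs_def)
    finally show ?thesis .
  qed
  show ?thesis
    unfolding even_degenerate_def
  proof (intro ex_cong1 conj_cong refl)
    fix vs assume "distinct vs" "set vs = {0..<n}"
    then show "(\<forall>i. i + 2 < n \<longrightarrow> even (card {j. i < j \<and> j < n \<and> {vs ! i, vs ! j} \<in> E})) \<longleftrightarrow>
        (\<forall>i. i + 2 < n \<longrightarrow> even (card (nbrs E (vs ! i) \<inter> set (drop (Suc i) vs))))"
      using later by presburger
  qed
qed

definition shift_above :: "nat \<Rightarrow> nat \<Rightarrow> nat" where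
  "shift_above k w = (if w < k then w else Suc w)"

lemma inj_shift_above: "inj (shift_above k)"
  by (auto simp: inj_def shift_above_def split: if_splits)

lemma shift_above_neq: "shift_above k w \<noteq> k"
  by (simp add: shift_above_def)

lemma shift_above_less: "x < n \<Longrightarrow> shift_above k x < Suc n"
  by (simp add: shift_above_def)

lemma range_shift_above: "range (shift_above k) = - {k}"
proof (intro equalityI subsetI)
  fix x assume "x \<in> - {k}"
  then have "x = shift_above k (if x < k then x else x - 1)"
    by (auto simp: shift_above_def)
  then show "x \<in> range (shift_above k)" by blast
qed (auto simp: shift_above_neq)

lemma shift_above_image_atLeast0LessThan: "k \<le> n \<Longrightarrow> shift_above k ` {0..<n} = {0..<Suc n} - {k}"
proof -
  assume "k \<le> n"
  then have "shift_above k ` {0..<n} = range (shift_above k) \<inter> {0..<Suc n}"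
    by (auto simp: shift_above_def)
  then show ?thesis by (simp add: range_shift_above Diff_eq Int_commute)
qed

definition even_below :: "nat set set \<Rightarrow> nat \<Rightarrow> nat set" where
  "even_below H k = {w. w < k \<and> even (card (nbrs H w))}"

definition extend :: "nat set set \<Rightarrow> nat \<Rightarrow> nat set \<Rightarrow> nat set set" where
  "extend H k S = image (shift_above k) ` H \<union> (\<lambda>w. {k, w}) ` (even_below H k \<union> S)"

lemma shift_above_image_in_extend: "shift_above k ` e \<in> extend H k S \<longleftrightarrow> e \<in> H"
proof -
  have "k \<notin> shift_above k ` e" using shift_above_neq by (metis imageE)
  then have "shift_above k ` e \<notin> (\<lambda>w. {k, w}) ` X" for X by auto
  moreover have "inj (image (shift_above k))"
    using inj_shift_above by (simp add: inj_def inj_image_eq_iff)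
  ultimately show ?thesis
    by (simp add: extend_def inj_image_mem_iff)
qed

lemma nbrs_extend_new: "nbrs (extend H k S) k = even_below H k \<union> S"
proof -
  have "{k, x} \<notin> image (shift_above k) ` H" for x
    using shift_above_neq by (metis imageE insertI1)
  then show ?thesis
    by (auto simp: nbrs_def extend_def doubleton_eq_iff)
qed

lemma nbrs_extend_shift_above:
  "nbrs (extend H k S) (shift_above k v) \<inter> shift_above k ` A = shift_above k ` (nbrs H v \<inter> A)"
proof -
  have "{shift_above k v, shift_above k y} \<in> extend H k S \<longleftrightarrow> {v, y} \<in> H" for y
    using shift_above_image_in_extend[of k "{v, y}" H S] by simp
  then show ?thesis by (auto simp: nbrs_def)
qed

lemma card_nbrs_extend_new:
  assumes "S \<subseteq> {k<..n}"
  shows "card (nbrs (extend H k S) k) = card (even_below H k) + card S"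
proof -
  have "finite (even_below H k)"
    by (rule finite_subset[of _ "{..<k}"]) (auto simp: even_below_def)
  moreover have "finite S" using assms finite_subset by blast
  moreover have "even_below H k \<inter> S = {}" using assms by (auto simp: even_below_def)
  ultimately show ?thesis by (simp add: nbrs_extend_new card_Un_disjoint)
qed

lemma odd_card_nbrs_extend_below:
  assumes "finite (nbrs H w)" "w < k" "w \<notin> S"
  shows "odd (card (nbrs (extend H k S) w))"
proof -
  let ?N = "nbrs (extend H k S) w"
  have "shift_above k w = w" using assms(2) by (simp add: shift_above_def)
  then have img: "?N - {k} = shift_above k ` nbrs H w"
    using nbrs_extend_shift_above[of H k S w UNIV] by (simp add: range_shift_above Diff_eq)
  have old: "card (?N - {k}) = card (nbrs H w)"
    unfolding img by (rule card_image[OF inj_on_subset[OF inj_shift_above subset_UNIV]])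
  have "finite (?N - {k})" unfolding img using assms(1) by (rule finite_imageI)
  then have fin: "finite ?N" by simp
  have "k \<in> ?N \<longleftrightarrow> w \<in> nbrs (extend H k S) k"
    by (simp add: nbrs_def insert_commute[of w k])
  also have "\<dots> \<longleftrightarrow> even (card (nbrs H w))"
    using assms(2,3) by (simp add: nbrs_extend_new even_below_def)
  finally have new: "k \<in> ?N \<longleftrightarrow> even (card (nbrs H w))" .
  show ?thesis
  proof (cases "k \<in> ?N")
    case True
    then have "card ?N = Suc (card (nbrs H w))" using card_Suc_Diff1[OF fin True] old by simp
    then show ?thesis using True new by simp
  next
    case False
    then have "card ?N = card (nbrs H w)" using old by simp
    then show ?thesis using False new by simp
  qed
qed

lemma least_even_degree_extend:
  assumes "H \<subseteq> all_edges n" "S \<subseteq> {k<..n}" "even (card (even_below H k) + card S)"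
  shows "(LEAST w. even (card (nbrs (extend H k S) w))) = k"
proof (rule Least_equality)
  show "even (card (nbrs (extend H k S) k))"
    using assms(2,3) by (simp add: card_nbrs_extend_new)
next
  fix w assume "even (card (nbrs (extend H k S) w))"
  moreover have "odd (card (nbrs (extend H k S) w))" if "w < k"
    using that assms(2) finite_nbrs[OF assms(1)] by (intro odd_card_nbrs_extend_below) auto
  ultimately show "k \<le> w" by (meson not_le)
qed

lemma extend_inj:
  assumes "H1 \<subseteq> all_edges n" "S1 \<subseteq> {k1<..n}" "even (card (even_below H1 k1) + card S1)"
    and "H2 \<subseteq> all_edges n" "S2 \<subseteq> {k2<..n}" "even (card (even_below H2 k2) + card S2)"
    and eq: "extend H1 k1 S1 = extend H2 k2 S2"
  shows "H1 = H2 \<and> k1 = k2 \<and> S1 = S2"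
proof -
  have k: "k1 = k2"
    using least_even_degree_extend[OF assms(1-3)] least_even_degree_extend[OF assms(4-6)] eq
    by simp
  have "e \<in> H1 \<longleftrightarrow> e \<in> H2" for e
    using shift_above_image_in_extend[of k1 e H1 S1] shift_above_image_in_extend[of k2 e H2 S2] eq k
    by simp
  then have H: "H1 = H2" by blast
  have "S = nbrs (extend H k S) k \<inter> {k<..}" if "S \<subseteq> {k<..n}" for H k S
    using that by (auto simp: nbrs_extend_new even_below_def)
  then have "S1 = S2" using assms(2,5) eq k by metis
  with H k show ?thesis by simp
qed

lemma extend_subset_all_edges:
  assumes "H \<subseteq> all_edges n" "k \<le> n" "S \<subseteq> {k<..n}"
  shows "extend H k S \<subseteq> all_edges (Suc n)"
proof
  fix e assume "e \<in> extend H k S"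
  then consider e' where "e' \<in> H" "e = shift_above k ` e'" | w where "w \<in> even_below H k \<union> S" "e = {k, w}"
    unfolding extend_def by blast
  then show "e \<in> all_edges (Suc n)"
  proof cases
    case 1
    then obtain x y where "x < n" "y < n" "x \<noteq> y" "e = {shift_above k x, shift_above k y}"
      using assms(1) by (auto elim!: all_edgesE)
    then show ?thesis
      using inj_shift_above by (auto intro!: in_all_edgesI shift_above_less dest: injD)
  next
    case 2
    then have "w < Suc n" "w \<noteq> k" using assms(2,3) by (auto simp: even_below_def)
    then show ?thesis using 2(2) assms(2) by (auto intro!: in_all_edgesI)
  qed
qed

lemma even_degenerate_extend:
  assumes "even_degenerate n H" "k \<le> n" "S \<subseteq> {k<..n}" "even (card (even_below H k) + card S)"
  shows "even_degenerate (Suc n) (extend H k S)"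
proof -
  let ?E = "extend H k S"
  obtain vs where vs: "distinct vs" "set vs = {0..<n}"
    "\<And>i. i + 2 < n \<Longrightarrow> even (card (nbrs H (vs ! i) \<inter> set (drop (Suc i) vs)))"
    using assms(1) unfolding even_degenerate_iff_nbrs by blast
  define ws where "ws = map (shift_above k) vs"
  have ws: "set ws = {0..<Suc n} - {k}"
    using vs(2) assms(2) by (simp add: ws_def shift_above_image_atLeast0LessThan)
  have "distinct ws"
    unfolding ws_def using vs(1) by (simp add: distinct_map inj_on_subset[OF inj_shift_above subset_UNIV])
  moreover have "k \<notin> set ws" using ws by blast
  ultimately have "distinct (k # ws)" by simp
  moreover have "set (k # ws) = {0..<Suc n}"
    using assms(2) by (simp add: ws insert_absorb)
  moreover have "even (card (nbrs ?E ((k # ws) ! i) \<inter> set (drop (Suc i) (k # ws))))"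
    if "i + 2 < Suc n" for i
  proof (cases i)
    case 0
    have "nbrs ?E k \<subseteq> set ws"
      using assms(2,3) by (auto simp: ws nbrs_extend_new even_below_def)
    then show ?thesis
      using 0 assms(3,4) by (simp add: Int_absorb2 card_nbrs_extend_new)
  next
    case (Suc j)
    have "nbrs ?E ((k # ws) ! i) \<inter> set (drop (Suc i) (k # ws))
        = shift_above k ` (nbrs H (vs ! j) \<inter> set (drop (Suc j) vs))"
      using Suc that vs(2) distinct_card[OF vs(1)]
      by (simp add: ws_def drop_map nbrs_extend_shift_above)
    then show ?thesis
      using vs(3)[of j] Suc that
      by (simp add: card_image[OF inj_on_subset[OF inj_shift_above subset_UNIV]])
  qed
  ultimately show ?thesis
    unfolding even_degenerate_iff_nbrs by (intro exI[of _ "k # ws"]) blast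
qed

definition even_degenerate_graphs :: "nat \<Rightarrow> nat set set set" where
  "even_degenerate_graphs n = {E \<in> Pow (all_edges n). even_degenerate n E}"

definition parity_completions :: "nat \<Rightarrow> nat set set \<Rightarrow> nat \<Rightarrow> nat set set" where
  "parity_completions n H k = {S. S \<subseteq> {k<..n} \<and> even (card (even_below H k) + card S)}"

lemma finite_even_degenerate_graphs: "finite (even_degenerate_graphs n)"
  unfolding even_degenerate_graphs_def using finite_all_edges by simp

lemma finite_parity_completions: "finite (parity_completions n H k)"
  by (rule finite_subset[of _ "Pow {k<..n}"]) (auto simp: parity_completions_def)

lemma card_parity_completions: "k < n \<Longrightarrow> card (parity_completions n H k) = 2 ^ (n - Suc k)"
  unfolding parity_completions_def
  using card_subsets_of_parity[of "{k<..n}" "card (even_below H k)"] by simp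

lemma card_even_degenerate_graphs_Suc:
  "card (even_degenerate_graphs n) * (2 ^ n - 1) \<le> card (even_degenerate_graphs (Suc n))"
proof -
  define I where "I = (SIGMA H:even_degenerate_graphs n. SIGMA k:{..<n}. parity_completions n H k)"
  have "inj_on (\<lambda>(H, k, S). extend H k S) I"
  proof (rule inj_onI)
    fix x y assume "x \<in> I" "y \<in> I" and eq: "(\<lambda>(H, k, S). extend H k S) x = (\<lambda>(H, k, S). extend H k S) y"
    obtain H1 k1 S1 H2 k2 S2 where xy: "x = (H1, k1, S1)" "y = (H2, k2, S2)"
      by (metis prod_cases3)
    have "H1 \<subseteq> all_edges n" "S1 \<subseteq> {k1<..n}" "even (card (even_below H1 k1) + card S1)"
      "H2 \<subseteq> all_edges n" "S2 \<subseteq> {k2<..n}" "even (card (even_below H2 k2) + card S2)"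
      using \<open>x \<in> I\<close> \<open>y \<in> I\<close>
      by (simp_all add: xy I_def even_degenerate_graphs_def parity_completions_def)
    from extend_inj[OF this] show "x = y" using eq by (simp add: xy)
  qed
  moreover have "(\<lambda>(H, k, S). extend H k S) ` I \<subseteq> even_degenerate_graphs (Suc n)"
  proof
    fix E assume "E \<in> (\<lambda>(H, k, S). extend H k S) ` I"
    then obtain H k S where "E = extend H k S" "H \<in> even_degenerate_graphs n" "k < n"
        "S \<in> parity_completions n H k"
      by (auto simp: I_def)
    then show "E \<in> even_degenerate_graphs (Suc n)"
      using extend_subset_all_edges[of H n k S] even_degenerate_extend[of n H k S]
      by (simp add: even_degenerate_graphs_def parity_completions_def)
  qed
  ultimately have "card I \<le> card (even_degenerate_graphs (Suc n))"
    using card_inj_on_le finite_even_degenerate_graphs by blast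
  moreover have "card I = card (even_degenerate_graphs n) * (2 ^ n - 1)"
  proof -
    have "card I = (\<Sum>H\<in>even_degenerate_graphs n. \<Sum>k<n. card (parity_completions n H k))"
      unfolding I_def
      by (simp add: card_SigmaI finite_even_degenerate_graphs finite_parity_completions)
    also have "\<dots> = card (even_degenerate_graphs n) * (2 ^ n - 1)"
      by (simp add: card_parity_completions sum_pow2_reflected)
    finally show ?thesis .
  qed
  ultimately show ?thesis by simp
qed

lemma c_eq_card_even_degenerate_graphs: "c n = 1 - card (even_degenerate_graphs n) / 2 ^ card (all_edges n)"
proof -
  let ?P = "Pow (all_edges n)" and ?G = "even_degenerate_graphs n"
  have fin: "finite ?P" using finite_all_edges by simp
  have sub: "?G \<subseteq> ?P" by (auto simp: even_degenerate_graphs_def)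
  have "c n = card (?P \<inter> {E. \<not> even_degenerate n E}) / card ?P"
    unfolding c_def Gnp_half_def by (rule measure_pmf_of_set) (use fin in auto)
  also have "?P \<inter> {E. \<not> even_degenerate n E} = ?P - ?G"
    by (auto simp: even_degenerate_graphs_def)
  also have "real (card (?P - ?G)) = real (card ?P) - real (card ?G)"
    using sub finite_even_degenerate_graphs by (simp add: card_Diff_subset of_nat_diff card_mono[OF fin])
  also have "card ?P = (2::nat) ^ card (all_edges n)"
    using finite_all_edges by (rule card_Pow)
  finally show ?thesis by (simp add: diff_divide_distrib)
qed

lemma c_Suc_le: "c (Suc n) \<le> (1 - 1 / 2 ^ n) * c n + 1 / 2 ^ n"
proof -
  define g where "g = real (card (even_degenerate_graphs n))"
  define g' where "g' = real (card (even_degenerate_graphs (Suc n)))"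
  define N where "N = card (all_edges n)"
  define q :: real where "q = 2 ^ n"
  have "q \<ge> 1" by (simp add: q_def)
  have "real (card (even_degenerate_graphs n) * (2 ^ n - 1)) = g * (q - 1)"
    unfolding g_def q_def by (simp add: of_nat_diff)
  then have "g * (q - 1) \<le> g'"
    using card_even_degenerate_graphs_Suc[of n] unfolding g'_def by (metis of_nat_le_iff)
  then have "g * (q - 1) / (2 ^ N * q) \<le> g' / (2 ^ N * q)"
    using \<open>q \<ge> 1\<close> by (intro divide_right_mono) auto
  moreover have "c n = 1 - g / 2 ^ N" "c (Suc n) = 1 - g' / (2 ^ N * q)"
    using c_eq_card_even_degenerate_graphs[of n] c_eq_card_even_degenerate_graphs[of "Suc n"]
    by (simp_all add: g_def g'_def N_def q_def card_all_edges_Suc power_add)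
  moreover have "(1 - 1 / q) * (1 - g / 2 ^ N) + 1 / q = 1 - g * (q - 1) / (2 ^ N * q)"
    using \<open>q \<ge> 1\<close> by (simp add: field_simps)
  ultimately show ?thesis unfolding q_def[symmetric] by simp
qed

text \<open>The bound holds for every \<open>n\<close>.\<close>

theorem mainTheorem15:
  fixes n :: nat
  assumes "n \<ge> 1"
  shows "c (n + 1) \<le> (1 - 2 powi (- int n)) * c n + 2 powi (- int n)"
  using c_Suc_le[of n] by (simp add: power_int_minus_divide)

end
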